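(* Let $G$ be a non-abelian finite simple group, $V$ a non-trivial irreducible $\mathbb{R}G$-module of odd dimension affording $\rho\colon G\to\mathrm{GL}(V)$, and $n\in\mathrm{GL}(V)$ of finite order normalizing $\rho(G)$; let $\nu\in\mathrm{Aut}(G)$ be defined by $\nu(x)=\rho^{-1}(n\rho(x)n^{-1})$. Suppose there is $g\in G$ such that $\alpha:=\mathrm{ad}_g\circ\nu$ has even order and $$\dim(V)>(|\alpha|-1)\,|C_G(\alpha_{(p)})|^{1/2}$$ for all primes $p$ dividing $|\alpha|$. Then there is $h\in G$ such that $\rho(h)n$ has eigenvalue $1$.
   Context: $\mathrm{ad}_g$ is the inner automorphism $x\mapsto gxg^{-1}$. For a prime $p$ dividing the order of $\alpha\in\mathrm{Aut}(G)$, $\alpha_{(p)}$ denotes an element of order $p$ in the cyclic group $\langle\alpha\rangle$, and $C_G(\alpha_{(p)})=\{x\in G\mid \alpha_{(p)}(x)=x\}$. *)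

theory Defs
  imports "HOL-Analysis.Analysis" "HOL-Algebra.SimpleGroups"
begin

fun mat_pow :: "real^'n^'n \<Rightarrow> nat \<Rightarrow> real^'n^'n" where
  "mat_pow A 0 = mat 1"
| "mat_pow A (Suc k) = A ** mat_pow A k"

definition real_rep :: "('g, 'b) monoid_scheme \<Rightarrow> ('g \<Rightarrow> real^'n^'n) \<Rightarrow> bool" where
  "real_rep G \<rho> \<longleftrightarrow> (\<forall>x\<in>carrier G. invertible (\<rho> x)) \<and>
     (\<forall>x\<in>carrier G. \<forall>y\<in>carrier G. \<rho> (x \<otimes>\<^bsub>G\<^esub> y) = \<rho> x ** \<rho> y)"

definition irreducible_rep :: "('g, 'b) monoid_scheme \<Rightarrow> ('g \<Rightarrow> real^'n^'n) \<Rightarrow> bool" where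
  "irreducible_rep G \<rho> \<longleftrightarrow> (\<forall>W::(real^'n) set. subspace W \<and> (\<forall>x\<in>carrier G. (\<lambda>v. \<rho> x *v v) ` W \<subseteq> W)
      \<longrightarrow> W = {0} \<or> W = UNIV)"

definition aut_order :: "('g, 'b) monoid_scheme \<Rightarrow> ('g \<Rightarrow> 'g) \<Rightarrow> nat" where
  "aut_order G \<alpha> = (LEAST k. 0 < k \<and> (\<forall>x\<in>carrier G. (\<alpha> ^^ k) x = x))"

definition fixed_points :: "('g, 'b) monoid_scheme \<Rightarrow> ('g \<Rightarrow> 'g) \<Rightarrow> 'g set" where
  "fixed_points G \<beta> = {x \<in> carrier G. \<beta> x = x}"

end

(* Put x = rho(g) n, so that rho(alpha u) x = x rho(u), and let m be the order of alpha.
   Then x^m commutes with the irreducible rho(G), hence is a scalar (Schur's lemma; odd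
   dimension supplies a real eigenvalue), and det x = +-1 with m even makes it the identity.
   For 0 < k < m a Gallagher-type argument gives tr(x^k)^2 <= |C_G(alpha^k)|, and
   C_G(alpha^k) lies in C_G(alpha^(m/p)) for a prime p dividing m / gcd(k, m).  The
   hypothesis thus yields |tr(x^k)| < dim V / (m - 1), so sum_{k<m} x^k, a multiple of the
   projection onto the fixed space of x, has positive trace and x fixes a nonzero vector. *)

theory Submission
  imports Defs "HOL-Algebra.Multiplicative_Group"
begin

section \<open>Matrices and finite sums\<close>

lemma mat_pow_Suc_right: "mat_pow A (Suc k) = mat_pow A k ** A"
  by (induction k) (simp_all add: matrix_mul_assoc)

lemma det_mat_pow: "det (mat_pow A k) = det A ^ k"
  by (induction k) (auto simp: det_mul)

lemma invertible_mat_pow: "invertible A \<Longrightarrow> invertible (mat_pow A k)"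
  by (induction k) (auto simp: invertible_mult, auto simp: invertible_def)

lemma abs_det_eq_1_if_mat_pow_eq_1:
  fixes A :: "real^'n^'n"
  assumes "mat_pow A k = mat 1" "0 < k"
  shows "\<bar>det A\<bar> = 1"
  using power_eq_1_iff[of "det A" k] assms by (metis det_I det_mat_pow real_norm_def less_numeral_extra(3))

lemma matrix_inv_right: "invertible A \<Longrightarrow> A ** matrix_inv A = mat 1"
  and matrix_inv_left: "invertible A \<Longrightarrow> matrix_inv A ** A = mat 1"
  unfolding invertible_def matrix_inv_def by (metis (mono_tags, lifting) someI_ex)+

lemma matrix_mul_sum_right: "finite S \<Longrightarrow> (A::'a::semiring_1^'n^'m) ** sum f S = (\<Sum>i\<in>S. A ** f i)"
  by (induction S rule: finite_induct) (auto simp: matrix_add_ldistrib)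

lemma matrix_add_rdistrib: "(B + C) ** (A::'a::semiring_1^'n^'m) = B ** A + C ** A"
  by (simp add: matrix_matrix_mult_def vec_eq_iff sum.distrib algebra_simps)

lemma matrix_mul_sum_left: "finite S \<Longrightarrow> sum f S ** (A::'a::semiring_1^'n^'m) = (\<Sum>i\<in>S. f i ** A)"
  by (induction S rule: finite_induct) (auto simp: matrix_add_rdistrib)

lemma matrix_vector_mult_sum: "finite S \<Longrightarrow> (sum f S :: 'a::semiring_1^'n^'m) *v v = (\<Sum>i\<in>S. f i *v v)"
  by (induction S rule: finite_induct) (auto simp: matrix_vector_mult_add_rdistrib)

lemma trace_sum: "finite S \<Longrightarrow> trace (sum f S :: 'a::comm_semiring_1^'n^'n) = (\<Sum>i\<in>S. trace (f i))"
  by (induction S rule: finite_induct) (auto simp: trace_add trace_0[simplified])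

lemma trace_transpose: "trace (transpose (A::'a::semiring_1^'n^'n)) = trace A"
  by (simp add: trace_def transpose_def)

lemma trace_scaleR: "trace (c *\<^sub>R (A::real^'n^'n)) = c * trace A"
  by (simp add: trace_def sum_distrib_left)

lemma det_scaleR: "det (c *\<^sub>R (A::real^'n^'n)) = c ^ CARD('n) * det A"
  unfolding det_def by (simp add: sum_distrib_left prod.distrib algebra_simps)

lemma real_eigenvector_odd_dim:
  fixes B :: "real^'n^'n"
  assumes "odd CARD('n)"
  obtains l v where "v \<noteq> 0" "B *v v = l *\<^sub>R v"
proof -
  define h where "h s = det (mat 1 - s *\<^sub>R B)" for s
  have "isCont h 0"
    unfolding h_def det_def by (intro continuous_intros)
  moreover have "h 0 = 1"
    by (simp add: h_def)
  ultimately obtain \<delta> where "\<delta> > 0" and \<delta>: "\<And>s. \<bar>s\<bar> < \<delta> \<Longrightarrow> \<bar>h s - 1\<bar> < 1"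
    unfolding continuous_at_eps_delta dist_real_def by (metis diff_zero zero_less_one)
  define f where "f x = det (B - x *\<^sub>R mat 1)" for x
  \<comment> \<open>As h is close to 1 near 0, f has the sign of (- x) ^ CARD('n) for large \<bar>x\<bar>.\<close>
  have f_eq: "f x = (- x) ^ CARD('n) * h (1 / x)" if "x \<noteq> 0" for x
  proof -
    have "B - x *\<^sub>R mat 1 = (- x) *\<^sub>R (mat 1 - (1 / x) *\<^sub>R B)"
      using that by (simp add: algebra_simps)
    then show ?thesis
      unfolding f_def h_def by (metis det_scaleR)
  qed
  define t where "t = 2 / \<delta>"
  have "t > 0" "h (1 / t) > 0" "h (1 / - t) > 0"
    using \<open>\<delta> > 0\<close> \<delta>[of "1 / t"] \<delta>[of "- 1 / t"] by (auto simp: t_def)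
  then have "f t < 0" "f (- t) > 0"
    using assms by (auto simp: f_eq mult_neg_pos power_minus_odd)
  moreover have "continuous_on {- t..t} f"
    unfolding f_def det_def by (intro continuous_intros)
  ultimately obtain l where "f l = 0"
    using IVT2'[of f t 0 "- t"] \<open>t > 0\<close> by force
  then have "\<not> invertible (B - l *\<^sub>R mat 1)"
    using invertible_det_nz unfolding f_def by blast
  then obtain v where "v \<noteq> 0" "(B - l *\<^sub>R mat 1) *v v = 0"
    using invertible_left_inverse matrix_left_invertible_ker by blast
  then show thesis
    by (intro that[of v l]) (simp_all add: matrix_vector_mult_diff_rdistrib flip: scaleR_matrix_vector_assoc)
qed

lemma scaleR_eq_1_if_det_eq:
  fixes A :: "real^'n^'n"
  assumes "odd CARD('n)" "det (c *\<^sub>R A) = det A" "det A \<noteq> 0"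
  shows "c = 1"
proof -
  have "c ^ CARD('n) = 1"
    using assms(2,3) by (simp add: det_scaleR)
  then have "\<bar>c\<bar> = 1"
    using power_eq_1_iff[of c] by fastforce
  then show ?thesis
    using \<open>c ^ CARD('n) = 1\<close> assms(1) by (cases "c < 0") auto
qed

lemma fixed_vector_if_mat_pow_eq_1:
  fixes A :: "real^'n^'n"
  assumes "mat_pow A m = mat 1" "(\<Sum>k<m. trace (mat_pow A k)) \<noteq> 0"
  obtains v where "v \<noteq> 0" "A *v v = v"
proof -
  define P where "P = (\<Sum>k<m. mat_pow A k)"
  have "A ** P = (\<Sum>k<m. mat_pow A (Suc k))"
    by (simp add: P_def matrix_mul_sum_right)
  also have "\<dots> = P"
    using assms(1) sum.lessThan_Suc_shift[of "mat_pow A" m] by (simp add: P_def add.commute)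
  finally have "A ** P = P" .
  have "trace P \<noteq> 0"
    using assms(2) by (simp add: P_def trace_sum)
  then have "P \<noteq> mat 0"
    using trace_0 by auto
  then obtain u where "P *v u \<noteq> 0"
    using matrix_eq[of P "mat 0"] by auto
  moreover have "A *v (P *v u) = P *v u"
    using \<open>A ** P = P\<close> by (simp add: matrix_vector_mul_assoc)
  ultimately show thesis
    using that by blast
qed

lemma sum_pos_if_other_terms_small:
  fixes f :: "nat \<Rightarrow> real"
  assumes "2 \<le> m" "\<And>k. 0 < k \<Longrightarrow> k < m \<Longrightarrow> \<bar>f k\<bar> < f 0 / (real m - 1)"
  shows "0 < (\<Sum>k<m. f k)"
proof -
  have "(\<Sum>k\<in>{1..<m}. - f k) < (\<Sum>k\<in>{1..<m}. f 0 / (real m - 1))"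
    using assms by (intro sum_strict_mono) (auto simp: abs_less_iff)
  also have "\<dots> = f 0"
    using assms(1) by simp
  finally have "0 < f 0 + (\<Sum>k\<in>{1..<m}. f k)"
    by (simp add: sum_negf)
  also have "\<dots> = (\<Sum>k<m. f k)"
    using assms(1) by (simp add: lessThan_atLeast0 sum.atLeast_Suc_lessThan)
  finally show ?thesis .
qed

lemma Cauchy_Schwarz_sum_comp:
  fixes f :: "'b \<Rightarrow> real"
  assumes "finite A" "finite B" "\<phi> ` A \<subseteq> B"
  shows "(\<Sum>u\<in>A. f (\<phi> u))\<^sup>2 \<le> (\<Sum>u\<in>A. real (card {u'\<in>A. \<phi> u' = \<phi> u})) * (\<Sum>v\<in>B. (f v)\<^sup>2)"
proof -
  define a where "a v = real (card {u\<in>A. \<phi> u = v})" for v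
  have fiber_sum: "(\<Sum>u\<in>A. g (\<phi> u)) = (\<Sum>v\<in>B. a v * g v)" for g :: "'b \<Rightarrow> real"
  proof -
    have "(\<Sum>u\<in>A. g (\<phi> u)) = (\<Sum>v\<in>B. \<Sum>u\<in>{u\<in>A. \<phi> u = v}. g (\<phi> u))"
      using sum.group[OF assms] by metis
    also have "\<dots> = (\<Sum>v\<in>B. a v * g v)"
      by (intro sum.cong) (auto simp: a_def)
    finally show ?thesis .
  qed
  have "(\<Sum>u\<in>A. f (\<phi> u))\<^sup>2 = (\<Sum>v\<in>B. a v * f v)\<^sup>2"
    by (simp only: fiber_sum)
  also have "\<dots> \<le> (\<Sum>v\<in>B. (a v)\<^sup>2) * (\<Sum>v\<in>B. (f v)\<^sup>2)"
    by (rule Cauchy_Schwarz_ineq_sum)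
  also have "(\<Sum>v\<in>B. (a v)\<^sup>2) = (\<Sum>u\<in>A. a (\<phi> u))"
    by (simp only: fiber_sum power2_eq_square)
  finally show ?thesis
    by (simp only: a_def)
qed

section \<open>Iterates of a map\<close>

lemma funpow_in_funcset: "f \<in> S \<rightarrow> S \<Longrightarrow> f ^^ n \<in> S \<rightarrow> S"
  by (induction n) auto

lemma funpow_mult_fixed: "(f ^^ d) u = u \<Longrightarrow> (f ^^ (d * i)) u = u"
  by (induction i) (simp_all add: funpow_add)

lemma funpow_fixed_gcd:
  assumes "f \<in> S \<rightarrow> S" "\<And>u. u \<in> S \<Longrightarrow> (f ^^ m) u = u"
    and "u \<in> S" "(f ^^ k) u = u"
  shows "(f ^^ gcd k m) u = u"
proof (cases "k = 0")
  case False
  obtain a b where ab: "k * a = m * b + gcd k m"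
    using bezout_nat[of k m] False by auto
  have "(f ^^ gcd k m) u \<in> S"
    using funpow_in_funcset[OF assms(1)] assms(3) by blast
  then have "(f ^^ (m * b)) ((f ^^ gcd k m) u) = (f ^^ gcd k m) u"
    by (intro funpow_mult_fixed assms(2))
  moreover have "(f ^^ (k * a)) u = u"
    using assms(4) by (rule funpow_mult_fixed)
  ultimately show ?thesis
    unfolding ab by (simp add: funpow_add)
qed (simp add: assms(2,3))

lemma prime_dvd_with_gcd_dvd_quotient:
  fixes k m :: nat
  assumes "0 < k" "k < m"
  obtains p where "prime p" "p dvd m" "gcd k m dvd m div p"
proof -
  define q where "q = gcd k m"
  obtain r where r: "m = q * r"
    unfolding q_def by (metis dvd_def gcd_dvd2)
  have "q \<le> k"
    using assms(1) by (simp add: q_def gcd_le1_nat)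
  then have "r \<noteq> 1"
    using r assms(2) by auto
  then obtain p where "prime p" "p dvd r"
    using prime_factor_nat by blast
  then obtain s where "r = p * s"
    by blast
  then have "m div p = q * s" and "p dvd m"
    using r \<open>prime p\<close> by (simp_all add: prime_gt_0_nat)
  then show thesis
    using that \<open>prime p\<close> by (simp add: q_def)
qed

lemma fixed_points_funpow_subset:
  assumes "f \<in> S \<rightarrow> S" "\<And>u. u \<in> S \<Longrightarrow> (f ^^ m) u = u" "0 < k" "k < m"
  obtains p where "prime p" "p dvd m" "{u \<in> S. (f ^^ k) u = u} \<subseteq> {u \<in> S. (f ^^ (m div p)) u = u}"
proof -
  obtain p where "prime p" "p dvd m" "gcd k m dvd m div p"
    using prime_dvd_with_gcd_dvd_quotient[OF assms(3,4)] .
  moreover have "(f ^^ (m div p)) u = u" if "u \<in> S" "(f ^^ k) u = u" for u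
    using funpow_fixed_gcd[OF assms(1,2) that] funpow_mult_fixed \<open>gcd k m dvd m div p\<close>
    by (metis dvdE)
  ultimately show thesis
    using that by blast
qed

lemma funpow_periodic_on_finite:
  assumes "finite S" "bij_betw f S S"
  obtains k where "0 < k" "\<And>u. u \<in> S \<Longrightarrow> (f ^^ k) u = u"
proof -
  define F where "F k = restrict (f ^^ k) S" for k
  have funpow_in: "(f ^^ k) u \<in> S" if "u \<in> S" for k u
    using bij_betwE[OF bij_betw_funpow[OF assms(2)]] that by blast
  have "range F \<subseteq> S \<rightarrow>\<^sub>E S"
    using funpow_in by (auto simp: F_def)
  then have "finite (range F)"
    by (rule finite_subset) (simp add: assms(1) finite_PiE)
  then have "\<not> inj F"
    using finite_imageD infinite_UNIV_nat by blast
  then obtain i j where "i < j" "F i = F j"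
    unfolding inj_def by (metis linorder_neqE_nat)
  have "(f ^^ (j - i)) u = u" if "u \<in> S" for u
  proof -
    have "f ^^ j = f ^^ i \<circ> f ^^ (j - i)"
      using \<open>i < j\<close> by (simp flip: funpow_add)
    then have "(f ^^ i) ((f ^^ (j - i)) u) = (f ^^ i) u"
      using fun_cong[OF \<open>F i = F j\<close>, of u] that by (simp add: F_def)
    then show ?thesis
      using inj_onD[OF bij_betw_imp_inj_on[OF bij_betw_funpow[OF assms(2)]]] funpow_in that
      by blast
  qed
  then show thesis
    using that[of "j - i"] \<open>i < j\<close> by simp
qed

section \<open>Real representations\<close>

locale real_representation = group G for G (structure) +
  fixes \<rho> :: "'a \<Rightarrow> real^'n^'n"
  assumes real_rep: "real_rep G \<rho>"
begin

lemma rep_mult: "x \<in> carrier G \<Longrightarrow> y \<in> carrier G \<Longrightarrow> \<rho> (x \<otimes> y) = \<rho> x ** \<rho> y"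
  using real_rep unfolding real_rep_def by blast

lemma rep_one: "\<rho> \<one> = mat 1"
proof -
  have "invertible (\<rho> \<one>)" "\<rho> \<one> = \<rho> \<one> ** \<rho> \<one>"
    using real_rep rep_mult[of \<one> \<one>] unfolding real_rep_def by auto
  then show ?thesis
    by (metis invertible_left_inverse matrix_mul_assoc matrix_mul_lid)
qed

lemma rep_inv_left: "x \<in> carrier G \<Longrightarrow> \<rho> (inv x) ** \<rho> x = mat 1"
  and rep_inv_right: "x \<in> carrier G \<Longrightarrow> \<rho> x ** \<rho> (inv x) = mat 1"
  using rep_mult[of "inv x" x] rep_mult[of x "inv x"] rep_one by simp_all

lemma rep_conj_cancel:
  "u \<in> carrier G \<Longrightarrow> \<rho> u ** A ** \<rho> (inv u) = \<rho> u ** B ** \<rho> (inv u) \<Longrightarrow> A = B"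
  by (metis matrix_mul_assoc matrix_mul_lid matrix_mul_rid rep_inv_left rep_inv_right)

lemma rep_conj_eq_iff_commute:
  assumes "z \<in> carrier G"
  shows "\<rho> z ** A ** \<rho> (inv z) = A \<longleftrightarrow> \<rho> z ** A = A ** \<rho> z"
proof
  assume "\<rho> z ** A ** \<rho> (inv z) = A"
  then have "\<rho> z ** A ** \<rho> (inv z) ** \<rho> z = A ** \<rho> z"
    by simp
  then show "\<rho> z ** A = A ** \<rho> z"
    using rep_inv_left[OF assms] by (simp flip: matrix_mul_assoc)
next
  assume "\<rho> z ** A = A ** \<rho> z"
  then show "\<rho> z ** A ** \<rho> (inv z) = A"
    using rep_inv_right[OF assms] by (simp flip: matrix_mul_assoc)
qed

lemma trace_rep_conj: "u \<in> carrier G \<Longrightarrow> trace (\<rho> u ** A ** \<rho> (inv u)) = trace A"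
  by (metis matrix_mul_assoc matrix_mul_rid rep_inv_left trace_mul_sym)

lemma rep_pow: "x \<in> carrier G \<Longrightarrow> \<rho> (x [^] k) = mat_pow (\<rho> x) k"
  by (induction k) (simp_all add: rep_one rep_mult flip: mat_pow_Suc_right)

lemma inj_on_if_simple:
  assumes "simple_group G" "\<exists>x\<in>carrier G. \<rho> x \<noteq> mat 1"
  shows "inj_on \<rho> (carrier G)"
proof (rule inj_onI)
  define K where "K = {u \<in> carrier G. \<rho> u = mat 1}"
  have "subgroup K G"
    by (rule subgroupI) (auto simp: K_def rep_one rep_mult dest: rep_inv_left)
  moreover have "x \<otimes> h \<otimes> inv x \<in> K" if "x \<in> carrier G" "h \<in> K" for x h
    using that rep_inv_right[of x] by (auto simp: K_def rep_mult)
  ultimately have "K \<lhd> G"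
    by (simp add: normal_inv_iff)
  moreover have "K \<noteq> carrier G"
    using assms(2) by (auto simp: K_def)
  ultimately have "K = {\<one>}"
    using simple_group.no_real_normal_subgroup[OF assms(1)] by blast
  fix u v assume uv: "u \<in> carrier G" "v \<in> carrier G" "\<rho> u = \<rho> v"
  then have "u \<otimes> inv v \<in> K"
    using rep_inv_right[of v] by (simp add: K_def rep_mult)
  then have "u \<otimes> inv v \<otimes> v = v"
    using \<open>K = {\<one>}\<close> uv(2) by simp
  then show "u = v"
    using uv by (simp add: m_assoc)
qed

lemma conj_intertwines:
  assumes "g \<in> carrier G" "v \<in> carrier G" "\<rho> v ** n = n ** \<rho> u"
  shows "\<rho> (g \<otimes> v \<otimes> inv g) ** (\<rho> g ** n) = (\<rho> g ** n) ** \<rho> u"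
proof -
  have "\<rho> (g \<otimes> v \<otimes> inv g) ** (\<rho> g ** n) = \<rho> g ** \<rho> v ** (\<rho> (inv g) ** \<rho> g) ** n"
    using assms by (simp add: rep_mult matrix_mul_assoc)
  also have "\<dots> = \<rho> g ** (\<rho> v ** n)"
    using assms(1) by (simp add: rep_inv_left, simp add: matrix_mul_assoc)
  also have "\<dots> = (\<rho> g ** n) ** \<rho> u"
    using assms(3) by (metis matrix_mul_assoc)
  finally show ?thesis .
qed

lemma conj_by_normalizing_matrix:
  assumes "inj_on \<rho> (carrier G)" "invertible n"
    and "(\<lambda>x. n ** \<rho> x ** matrix_inv n) ` carrier G = \<rho> ` carrier G" "u \<in> carrier G"
  shows "the_inv_into (carrier G) \<rho> (n ** \<rho> u ** matrix_inv n) \<in> carrier G"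
    and "\<rho> (the_inv_into (carrier G) \<rho> (n ** \<rho> u ** matrix_inv n)) ** n = n ** \<rho> u"
proof -
  have "n ** \<rho> u ** matrix_inv n \<in> \<rho> ` carrier G"
    using assms(3,4) by blast
  then show "the_inv_into (carrier G) \<rho> (n ** \<rho> u ** matrix_inv n) \<in> carrier G"
    and "\<rho> (the_inv_into (carrier G) \<rho> (n ** \<rho> u ** matrix_inv n)) ** n = n ** \<rho> u"
    using the_inv_into_into[OF assms(1)] f_the_inv_into_f[OF assms(1)] matrix_inv_left[OF assms(2)]
    by (auto simp flip: matrix_mul_assoc)
qed

definition normalizes :: "real^'n^'n \<Rightarrow> bool" where
  "normalizes y \<longleftrightarrow> (\<forall>u\<in>carrier G. \<exists>u'\<in>carrier G. y ** \<rho> u = \<rho> u' ** y)"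

end

locale odd_irrep = real_representation G \<rho> for G (structure) and \<rho> :: "'a \<Rightarrow> real^'n^'n" +
  assumes finite_carrier: "finite (carrier G)"
    and irreducible: "irreducible_rep G \<rho>"
    and odd_dim: "odd CARD('n)"
begin

lemma abs_det_rep: "x \<in> carrier G \<Longrightarrow> \<bar>det (\<rho> x)\<bar> = 1"
  using rep_pow[of x "order G"] pow_order_eq_1[of x] rep_one finite_carrier
  by (intro abs_det_eq_1_if_mat_pow_eq_1[of _ "order G"]) (auto simp: order_gt_0_iff_finite)

lemma commuting_is_scalar:
  assumes "\<And>u. u \<in> carrier G \<Longrightarrow> B ** \<rho> u = \<rho> u ** B"
  obtains c where "B = c *\<^sub>R mat 1"
proof -
  obtain l v where v: "v \<noteq> 0" "B *v v = l *\<^sub>R v"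
    using real_eigenvector_odd_dim[OF odd_dim] by blast
  define W where "W = {w. B *v w = l *\<^sub>R w}"
  have "subspace W"
    unfolding W_def subspace_def
    by (auto simp: matrix_vector_right_distrib scaleR_add_right matrix_vector_mult_scaleR)
  moreover have "(\<lambda>w. \<rho> u *v w) ` W \<subseteq> W" if "u \<in> carrier G" for u
  proof -
    have "B *v (\<rho> u *v w) = \<rho> u *v (B *v w)" for w
      using assms[OF that] by (metis matrix_vector_mul_assoc)
    then show ?thesis
      by (auto simp: W_def matrix_vector_mult_scaleR)
  qed
  ultimately have "W = {0} \<or> W = UNIV"
    using irreducible unfolding irreducible_rep_def by blast
  then have "W = UNIV"
    using v by (auto simp: W_def)
  then have "B *v w = (l *\<^sub>R mat 1) *v w" for w
    by (auto simp: W_def simp flip: scaleR_matrix_vector_assoc)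
  then show thesis
    using that matrix_eq by blast
qed

definition rep_average :: "real^'n^'n \<Rightarrow> real^'n^'n" where
  "rep_average A = (\<Sum>u\<in>carrier G. \<rho> u ** A ** \<rho> (inv u))"

lemma rep_average_commutes: "v \<in> carrier G \<Longrightarrow> rep_average A ** \<rho> v = \<rho> v ** rep_average A"
proof -
  assume v: "v \<in> carrier G"
  have "\<rho> v ** rep_average A = (\<Sum>u\<in>carrier G. \<rho> (v \<otimes> u) ** A ** \<rho> (inv u))"
    using finite_carrier v by (simp add: rep_average_def matrix_mul_sum_right rep_mult matrix_mul_assoc)
  also have "\<dots> = (\<Sum>u\<in>carrier G. \<rho> u ** A ** \<rho> (inv (inv v \<otimes> u)))"
    using v by (intro sum.reindex_bij_witness[of _ "\<lambda>u. inv v \<otimes> u" "\<lambda>u. v \<otimes> u"])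
      (auto simp: m_assoc[symmetric])
  also have "\<dots> = (\<Sum>u\<in>carrier G. \<rho> u ** A ** \<rho> (inv u) ** \<rho> v)"
    using v by (intro sum.cong) (auto simp: inv_mult_group rep_mult matrix_mul_assoc)
  also have "\<dots> = rep_average A ** \<rho> v"
    using finite_carrier by (simp add: rep_average_def matrix_mul_sum_left)
  finally show ?thesis ..
qed

lemma rep_average_eq: "rep_average A = (card (carrier G) * trace A / CARD('n)) *\<^sub>R mat 1"
proof -
  obtain c where c: "rep_average A = c *\<^sub>R mat 1"
    using commuting_is_scalar rep_average_commutes by metis
  have "c * CARD('n) = trace (rep_average A)"
    by (simp add: c trace_scaleR trace_I)
  also have "\<dots> = card (carrier G) * trace A"
    using finite_carrier by (simp add: rep_average_def trace_sum trace_rep_conj)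
  finally show ?thesis
    by (simp add: c field_simps)
qed

lemma sum_rep_entry_mult:
  "(\<Sum>u\<in>carrier G. \<rho> u $ a $ k * \<rho> (inv u) $ l $ b) =
     (if k = l \<and> a = b then card (carrier G) / CARD('n) else 0)"
proof -
  define E :: "real^'n^'n" where "E = (\<chi> i j. of_bool (i = k) * of_bool (j = l))"
  have "(X ** E) $ a $ j = of_bool (j = l) * X $ a $ k" for X :: "real^'n^'n" and j
    unfolding E_def matrix_matrix_mult_def
    by (simp add: mult.assoc[symmetric] sum_distrib_right[symmetric])
  then have "(X ** E ** Y) $ a $ b = X $ a $ k * Y $ l $ b" for X Y :: "real^'n^'n"
    unfolding matrix_matrix_mult_def[of "X ** E"] by (simp add: mult.assoc)
  then have "(\<Sum>u\<in>carrier G. \<rho> u $ a $ k * \<rho> (inv u) $ l $ b) = rep_average E $ a $ b"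
    by (simp add: rep_average_def sum_component)
  moreover have "trace E = of_bool (k = l)"
    by (simp add: E_def trace_def)
  ultimately show ?thesis
    by (simp add: rep_average_eq mat_def)
qed

lemma sum_trace_rep_mult:
  "(\<Sum>u\<in>carrier G. trace (\<rho> u ** A) * trace (\<rho> (inv u) ** B)) =
     card (carrier G) / CARD('n) * trace (A ** B)"
proof -
  let ?c = "card (carrier G) / CARD('n)"
  have "trace (\<rho> u ** A) * trace (\<rho> (inv u) ** B) =
      (\<Sum>l\<in>UNIV. \<Sum>a\<in>UNIV. \<Sum>b\<in>UNIV. \<Sum>k\<in>UNIV.
         (\<rho> u $ a $ k * \<rho> (inv u) $ l $ b) * (A $ k $ a * B $ b $ l))" for u
    by (simp add: trace_def matrix_matrix_mult_def sum_distrib_left sum_distrib_right mult_ac)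
  then have "(\<Sum>u\<in>carrier G. trace (\<rho> u ** A) * trace (\<rho> (inv u) ** B)) =
      (\<Sum>l\<in>UNIV. \<Sum>a\<in>UNIV. \<Sum>b\<in>UNIV. \<Sum>k\<in>UNIV.
         (\<Sum>u\<in>carrier G. \<rho> u $ a $ k * \<rho> (inv u) $ l $ b) * (A $ k $ a * B $ b $ l))"
    by (simp only: sum.swap[where A = "carrier G"] sum_distrib_right)
  also have "\<dots> = (\<Sum>l\<in>UNIV. \<Sum>a\<in>UNIV. ?c * (A $ l $ a * B $ a $ l))"
  proof -
    have "(if k = l \<and> a = b then x else 0) * y = (if k = l then if a = b then x * y else 0 else 0)"
      for k l a b :: 'n and x y :: real
      by simp
    then show ?thesis
      by (simp add: sum_rep_entry_mult)
  qed
  also have "\<dots> = ?c * trace (A ** B)"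
    by (simp add: trace_def matrix_matrix_mult_def sum_distrib_left)
  finally show ?thesis .
qed

definition invariant_form :: "real^'n^'n" where
  "invariant_form = (\<Sum>u\<in>carrier G. transpose (\<rho> u) ** \<rho> u)"

lemma invariant_form_invariant:
  "v \<in> carrier G \<Longrightarrow> transpose (\<rho> v) ** invariant_form ** \<rho> v = invariant_form"
proof -
  assume v: "v \<in> carrier G"
  have "transpose (\<rho> v) ** invariant_form ** \<rho> v =
      (\<Sum>u\<in>carrier G. transpose (\<rho> (u \<otimes> v)) ** \<rho> (u \<otimes> v))"
    using finite_carrier v
    by (simp add: invariant_form_def matrix_mul_sum_right matrix_mul_sum_left rep_mult
        matrix_transpose_mul matrix_mul_assoc)
  also have "\<dots> = invariant_form"
    unfolding invariant_form_def
    using v by (intro sum.reindex_bij_witness[of _ "\<lambda>u. u \<otimes> inv v" "\<lambda>u. u \<otimes> v"])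
      (auto simp: m_assoc)
  finally show ?thesis .
qed

lemma invertible_invariant_form: "invertible invariant_form"
proof -
  have "invariant_form *v v \<noteq> 0" if "v \<noteq> 0" for v
  proof -
    have "0 < (\<rho> \<one> *v v) \<bullet> (\<rho> \<one> *v v)"
      using that by (simp add: rep_one)
    also have "\<dots> \<le> (\<Sum>u\<in>carrier G. (\<rho> u *v v) \<bullet> (\<rho> u *v v))"
      using finite_carrier by (intro member_le_sum) auto
    also have "\<dots> = v \<bullet> (invariant_form *v v)"
      using finite_carrier
      by (simp add: invariant_form_def matrix_vector_mult_sum inner_sum_right inner_commute
          flip: matrix_vector_mul_assoc dot_lmul_matrix)
    finally show ?thesis
      by auto
  qed
  then show ?thesis
    using matrix_left_invertible_ker invertible_left_inverse by blast
qed

lemma invariant_form_intertwines: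
  assumes "u \<in> carrier G" "transpose (\<rho> u) ** N ** \<rho> u = N"
  shows "N ** \<rho> u = transpose (\<rho> (inv u)) ** N"
proof -
  have "transpose (\<rho> (inv u)) ** transpose (\<rho> u) = mat 1"
    using assms(1) by (simp add: rep_inv_right flip: matrix_transpose_mul)
  then show ?thesis
    using assms(2) by (metis matrix_mul_assoc matrix_mul_lid)
qed

lemma invariant_form_unique:
  assumes "\<And>u. u \<in> carrier G \<Longrightarrow> transpose (\<rho> u) ** N ** \<rho> u = N"
  obtains c where "N = c *\<^sub>R invariant_form"
proof -
  let ?M = invariant_form and ?M' = "matrix_inv invariant_form"
  have "(?M' ** N) ** \<rho> u = \<rho> u ** (?M' ** N)" if "u \<in> carrier G" for u
  proof -
    have "?M ** \<rho> u = transpose (\<rho> (inv u)) ** ?M"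
      by (rule invariant_form_intertwines[OF that invariant_form_invariant[OF that]])
    then have "?M' ** transpose (\<rho> (inv u)) = \<rho> u ** ?M'"
      using invertible_invariant_form
      by (metis matrix_inv_left matrix_inv_right matrix_mul_assoc matrix_mul_lid matrix_mul_rid)
    moreover have "N ** \<rho> u = transpose (\<rho> (inv u)) ** N"
      by (rule invariant_form_intertwines[OF that assms[OF that]])
    ultimately have "(?M' ** N) ** \<rho> u = (\<rho> u ** ?M') ** N"
      by (metis matrix_mul_assoc)
    then show ?thesis
      by (simp add: matrix_mul_assoc)
  qed
  then obtain c where "?M' ** N = c *\<^sub>R mat 1"
    using commuting_is_scalar by metis
  then have "N = c *\<^sub>R ?M"
    using invertible_invariant_form
    by (metis matrix_inv_right matrix_mul_assoc matrix_mul_lid matrix_mul_rid matrix_scalar_ac)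
  then show thesis
    by (rule that)
qed

lemma normalizer_preserves_invariant_form:
  assumes "normalizes y" "\<bar>det y\<bar> = 1"
  shows "transpose y ** invariant_form ** y = invariant_form"
proof -
  define N where "N = transpose y ** invariant_form ** y"
  have "transpose (\<rho> u) ** N ** \<rho> u = N" if u: "u \<in> carrier G" for u
  proof -
    obtain u' where "u' \<in> carrier G" "y ** \<rho> u = \<rho> u' ** y"
      using assms(1) u unfolding normalizes_def by blast
    have "transpose (\<rho> u) ** N ** \<rho> u = transpose (y ** \<rho> u) ** invariant_form ** (y ** \<rho> u)"
      by (simp add: N_def matrix_transpose_mul matrix_mul_assoc)
    also have "\<dots> = transpose y ** (transpose (\<rho> u') ** invariant_form ** \<rho> u') ** y"
      using \<open>y ** \<rho> u = \<rho> u' ** y\<close> by (simp add: matrix_transpose_mul matrix_mul_assoc)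
    also have "\<dots> = N"
      using invariant_form_invariant[OF \<open>u' \<in> carrier G\<close>] by (simp add: N_def)
    finally show ?thesis .
  qed
  then obtain c where c: "N = c *\<^sub>R invariant_form"
    using invariant_form_unique by metis
  have "det y * det y = 1"
    using assms(2) abs_mult_self_eq[of "det y"] by simp
  then have "det (c *\<^sub>R invariant_form) = det invariant_form"
    by (simp add: c[symmetric] N_def det_mul)
  then have "c = 1"
    using scaleR_eq_1_if_det_eq[OF odd_dim] invertible_invariant_form invertible_det_nz by blast
  then show ?thesis
    using c by (simp add: N_def)
qed

lemma trace_right_inverse_normalizer:
  assumes "normalizes y" "\<bar>det y\<bar> = 1" "y ** y' = mat 1"
  shows "trace y' = trace y"
proof -
  let ?M = invariant_form and ?M' = "matrix_inv invariant_form"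
  have "(?M' ** transpose y ** ?M) ** y = ?M' ** (transpose y ** ?M ** y)"
    by (simp add: matrix_mul_assoc)
  also have "\<dots> = mat 1"
    using normalizer_preserves_invariant_form[OF assms(1,2)] invertible_invariant_form
    by (simp add: matrix_inv_left)
  finally have "(?M' ** transpose y ** ?M) ** y = mat 1" .
  then have "y' = (?M' ** transpose y ** ?M) ** (y ** y')"
    by (simp add: matrix_mul_assoc)
  also have "\<dots> = ?M' ** transpose y ** ?M"
    using assms(3) by simp
  also have "trace \<dots> = trace (?M ** (?M' ** transpose y))"
    by (rule trace_mul_sym)
  also have "\<dots> = trace y"
    using invertible_invariant_form
    by (simp add: matrix_inv_right trace_transpose matrix_mul_assoc)
  finally show ?thesis .
qed

end

section \<open>Traces of elements normalizing a faithful representation\<close>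

locale faithful_odd_irrep = odd_irrep G \<rho> for G (structure) and \<rho> :: "'a \<Rightarrow> real^'n^'n" +
  assumes faithful: "inj_on \<rho> (carrier G)"
begin

context
  fixes w :: "real^'n^'n" and \<beta> :: "'a \<Rightarrow> 'a"
  assumes invertible_w: "invertible w" and abs_det_w: "\<bar>det w\<bar> = 1"
    and \<beta>_closed: "\<beta> \<in> carrier G \<rightarrow> carrier G"
    and \<beta>_intertwines: "\<And>u. u \<in> carrier G \<Longrightarrow> \<rho> (\<beta> u) ** w = w ** \<rho> u"
begin

lemma normalizes_rep_mult: "v \<in> carrier G \<Longrightarrow> normalizes (\<rho> v ** w)"
  unfolding normalizes_def
proof
  fix u assume "v \<in> carrier G" "u \<in> carrier G"
  then have "\<rho> (v \<otimes> \<beta> u \<otimes> inv v) ** (\<rho> v ** w) =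
      \<rho> v ** \<rho> (\<beta> u) ** (\<rho> (inv v) ** \<rho> v) ** w"
    using funcset_mem[OF \<beta>_closed \<open>u \<in> carrier G\<close>] by (simp add: rep_mult matrix_mul_assoc)
  also have "\<dots> = \<rho> v ** (\<rho> (\<beta> u) ** w)"
    using \<open>v \<in> carrier G\<close> by (simp add: rep_inv_left matrix_mul_assoc)
  also have "\<dots> = \<rho> v ** w ** \<rho> u"
    using \<open>u \<in> carrier G\<close> by (simp add: \<beta>_intertwines matrix_mul_assoc)
  finally show "\<exists>u'\<in>carrier G. \<rho> v ** w ** \<rho> u = \<rho> u' ** (\<rho> v ** w)"
    using \<open>v \<in> carrier G\<close> funcset_mem[OF \<beta>_closed \<open>u \<in> carrier G\<close>] by (metis m_closed inv_closed)
qed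

text \<open>Since \<rho> v w preserves the invariant form, tr((\<rho> v w)^-1) = tr(\<rho> v w), which turns the
  Schur orthogonality relation into a sum of squares.\<close>

lemma sum_trace_rep_mult_squared: "(\<Sum>v\<in>carrier G. (trace (\<rho> v ** w))\<^sup>2) = card (carrier G)"
proof -
  let ?w' = "matrix_inv w"
  have "(trace (\<rho> v ** w))\<^sup>2 = trace (\<rho> v ** w) * trace (\<rho> (inv v) ** ?w')"
    if "v \<in> carrier G" for v
  proof -
    have "(\<rho> v ** w) ** (?w' ** \<rho> (inv v)) = \<rho> v ** (w ** ?w') ** \<rho> (inv v)"
      by (simp add: matrix_mul_assoc)
    also have "\<dots> = mat 1"
      using that invertible_w by (simp add: matrix_inv_right rep_inv_right)
    finally have "(\<rho> v ** w) ** (?w' ** \<rho> (inv v)) = mat 1" .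
    then have "trace (?w' ** \<rho> (inv v)) = trace (\<rho> v ** w)"
      using that abs_det_w abs_det_rep
      by (intro trace_right_inverse_normalizer normalizes_rep_mult) (simp_all add: det_mul abs_mult)
    then show ?thesis
      by (simp add: power2_eq_square trace_mul_sym[of ?w'])
  qed
  then have "(\<Sum>v\<in>carrier G. (trace (\<rho> v ** w))\<^sup>2) =
      (\<Sum>v\<in>carrier G. trace (\<rho> v ** w) * trace (\<rho> (inv v) ** ?w'))"
    by (intro sum.cong) auto
  also have "\<dots> = card (carrier G)"
    using invertible_w by (simp add: sum_trace_rep_mult matrix_inv_right trace_I)
  finally show ?thesis .
qed

lemma rep_mult_cancel_right: "a \<in> carrier G \<Longrightarrow> b \<in> carrier G \<Longrightarrow> \<rho> a ** w = \<rho> b ** w \<Longrightarrow> a = b"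
  using faithful invertible_w
  by (metis inj_onD matrix_inv_right matrix_mul_assoc matrix_mul_rid)

lemma rep_conj_eq: "u \<in> carrier G \<Longrightarrow> \<rho> (u \<otimes> \<beta> (inv u)) ** w = \<rho> u ** w ** \<rho> (inv u)"
proof -
  assume "u \<in> carrier G"
  then have "\<rho> (u \<otimes> \<beta> (inv u)) ** w = \<rho> u ** (\<rho> (\<beta> (inv u)) ** w)"
    using funcset_mem[OF \<beta>_closed, of "inv u"] by (simp add: rep_mult matrix_mul_assoc)
  then show ?thesis
    using \<open>u \<in> carrier G\<close> by (simp add: \<beta>_intertwines matrix_mul_assoc)
qed

lemma commutes_iff_fixed: "z \<in> carrier G \<Longrightarrow> \<rho> z ** w = w ** \<rho> z \<longleftrightarrow> \<beta> z = z"
  using funcset_mem[OF \<beta>_closed, of z] rep_mult_cancel_right[of "\<beta> z" z]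
  by (auto simp: \<beta>_intertwines[symmetric])

lemma card_twisted_fiber:
  assumes "u \<in> carrier G"
  shows "card {u' \<in> carrier G. u' \<otimes> \<beta> (inv u') = u \<otimes> \<beta> (inv u)} = card (fixed_points G \<beta>)"
proof -
  have twisted_closed: "a \<otimes> \<beta> (inv a) \<in> carrier G" if "a \<in> carrier G" for a
    using that funcset_mem[OF \<beta>_closed] by simp
  have fiber_iff: "u \<otimes> z \<otimes> \<beta> (inv (u \<otimes> z)) = u \<otimes> \<beta> (inv u) \<longleftrightarrow> \<beta> z = z"
    if "z \<in> carrier G" for z
  proof -
    have "u \<otimes> z \<otimes> \<beta> (inv (u \<otimes> z)) = u \<otimes> \<beta> (inv u) \<longleftrightarrow>
        \<rho> (u \<otimes> z) ** w ** \<rho> (inv (u \<otimes> z)) = \<rho> u ** w ** \<rho> (inv u)"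
      using assms that rep_mult_cancel_right twisted_closed by (auto simp flip: rep_conj_eq)
    also have "\<rho> (u \<otimes> z) ** w ** \<rho> (inv (u \<otimes> z)) = \<rho> u ** (\<rho> z ** w ** \<rho> (inv z)) ** \<rho> (inv u)"
      using assms that by (simp add: rep_mult inv_mult_group matrix_mul_assoc)
    also have "\<dots> = \<rho> u ** w ** \<rho> (inv u) \<longleftrightarrow> \<rho> z ** w ** \<rho> (inv z) = w"
      using rep_conj_cancel[OF assms] by auto
    also have "\<dots> \<longleftrightarrow> \<beta> z = z"
      using that by (simp add: rep_conj_eq_iff_commute commutes_iff_fixed)
    finally show ?thesis .
  qed
  have "{u' \<in> carrier G. u' \<otimes> \<beta> (inv u') = u \<otimes> \<beta> (inv u)} = (\<lambda>z. u \<otimes> z) ` fixed_points G \<beta>"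
  proof (intro equalityI subsetI)
    fix u' assume "u' \<in> {u' \<in> carrier G. u' \<otimes> \<beta> (inv u') = u \<otimes> \<beta> (inv u)}"
    moreover define z where "z = inv u \<otimes> u'"
    ultimately have "z \<in> carrier G" "u \<otimes> z = u'" "u' \<otimes> \<beta> (inv u') = u \<otimes> \<beta> (inv u)"
      using assms by (auto simp: m_assoc[symmetric])
    then show "u' \<in> (\<lambda>z. u \<otimes> z) ` fixed_points G \<beta>"
      using fiber_iff[of z] by (auto simp: fixed_points_def)
  next
    fix u' assume "u' \<in> (\<lambda>z. u \<otimes> z) ` fixed_points G \<beta>"
    then show "u' \<in> {u' \<in> carrier G. u' \<otimes> \<beta> (inv u') = u \<otimes> \<beta> (inv u)}"
      using assms fiber_iff by (auto simp: fixed_points_def)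
  qed
  moreover have "inj_on (\<lambda>z. u \<otimes> z) (fixed_points G \<beta>)"
    using assms by (auto simp: fixed_points_def inj_on_def)
  ultimately show ?thesis
    by (simp add: card_image)
qed

text \<open>Cauchy--Schwarz over the fibres of u \<mapsto> u \<beta>(u^-1), which are the cosets u C_G(\<beta>),
  applied to t(v) = tr(\<rho> v w): the sum of t over the twisted conjugates is |G| tr w, while
  the sum of t^2 over G is |G|.\<close>

theorem trace_squared_le_card_fixed_points: "(trace w)\<^sup>2 \<le> card (fixed_points G \<beta>)"
proof -
  let ?n = "real (card (carrier G))"
  define \<phi> where "\<phi> u = u \<otimes> \<beta> (inv u)" for u
  have \<phi>_closed: "\<phi> ` carrier G \<subseteq> carrier G"
    using \<beta>_closed by (auto simp: \<phi>_def)
  have "(\<Sum>u\<in>carrier G. trace (\<rho> (\<phi> u) ** w)) = ?n * trace w"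
    by (simp add: \<phi>_def rep_conj_eq trace_rep_conj)
  moreover have "(\<Sum>u\<in>carrier G. real (card {u' \<in> carrier G. \<phi> u' = \<phi> u})) =
      ?n * card (fixed_points G \<beta>)"
    by (simp add: \<phi>_def card_twisted_fiber)
  ultimately have "(?n * trace w)\<^sup>2 \<le> ?n * card (fixed_points G \<beta>) * ?n"
    using Cauchy_Schwarz_sum_comp[OF finite_carrier finite_carrier \<phi>_closed, of "\<lambda>v. trace (\<rho> v ** w)"]
    by (simp add: sum_trace_rep_mult_squared)
  moreover have "?n > 0"
    using finite_carrier one_closed by (auto simp: card_gt_0_iff)
  ultimately show ?thesis
    by (simp add: power2_eq_square mult_ac)
qed

end

context
  fixes x :: "real^'n^'n" and \<alpha> :: "'a \<Rightarrow> 'a"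
  assumes invertible_x: "invertible x" and abs_det_x: "\<bar>det x\<bar> = 1"
    and \<alpha>_closed: "\<alpha> \<in> carrier G \<rightarrow> carrier G"
    and \<alpha>_intertwines: "\<And>u. u \<in> carrier G \<Longrightarrow> \<rho> (\<alpha> u) ** x = x ** \<rho> u"
begin

lemma funpow_intertwines: "u \<in> carrier G \<Longrightarrow> \<rho> ((\<alpha> ^^ k) u) ** mat_pow x k = mat_pow x k ** \<rho> u"
proof (induction k)
  case (Suc k)
  have "(\<alpha> ^^ k) u \<in> carrier G"
    using funpow_in_funcset[OF \<alpha>_closed] Suc.prems by blast
  then have "\<rho> ((\<alpha> ^^ Suc k) u) ** mat_pow x (Suc k) = x ** (\<rho> ((\<alpha> ^^ k) u) ** mat_pow x k)"
    by (simp add: \<alpha>_intertwines matrix_mul_assoc)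
  then show ?case
    using Suc by (simp add: matrix_mul_assoc)
qed simp

lemma trace_mat_pow_squared_le: "(trace (mat_pow x k))\<^sup>2 \<le> card (fixed_points G (\<alpha> ^^ k))"
  using invertible_mat_pow[OF invertible_x] abs_det_x funpow_in_funcset[OF \<alpha>_closed]
    funpow_intertwines
  by (intro trace_squared_le_card_fixed_points) (simp_all add: det_mat_pow power_abs)

lemma bij_betw_intertwiner: "bij_betw \<alpha> (carrier G) (carrier G)"
proof -
  have "inj_on \<alpha> (carrier G)"
  proof (rule inj_onI)
    fix u v assume "u \<in> carrier G" "v \<in> carrier G" "\<alpha> u = \<alpha> v"
    then have "matrix_inv x ** (x ** \<rho> u) = matrix_inv x ** (x ** \<rho> v)"
      by (simp flip: \<alpha>_intertwines)
    then show "u = v"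
      using invertible_x faithful \<open>u \<in> carrier G\<close> \<open>v \<in> carrier G\<close>
      by (simp add: matrix_mul_assoc matrix_inv_left inj_on_eq_iff)
  qed
  then show ?thesis
    using \<alpha>_closed finite_carrier by (simp add: bij_betw_def endo_inj_surj image_subset_iff_funcset)
qed

lemma aut_order_pos: "0 < aut_order G \<alpha>"
  and funpow_aut_order: "u \<in> carrier G \<Longrightarrow> (\<alpha> ^^ aut_order G \<alpha>) u = u"
proof -
  obtain k where "0 < k \<and> (\<forall>u\<in>carrier G. (\<alpha> ^^ k) u = u)"
    using funpow_periodic_on_finite[OF finite_carrier bij_betw_intertwiner] by metis
  then have "0 < aut_order G \<alpha> \<and> (\<forall>u\<in>carrier G. (\<alpha> ^^ aut_order G \<alpha>) u = u)"
    unfolding aut_order_def by (rule LeastI)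
  then show "0 < aut_order G \<alpha>" "u \<in> carrier G \<Longrightarrow> (\<alpha> ^^ aut_order G \<alpha>) u = u"
    by simp_all
qed

lemma mat_pow_aut_order:
  assumes "even (aut_order G \<alpha>)"
  shows "mat_pow x (aut_order G \<alpha>) = mat 1"
proof -
  have "mat_pow x (aut_order G \<alpha>) ** \<rho> u = \<rho> u ** mat_pow x (aut_order G \<alpha>)" if "u \<in> carrier G" for u
    using funpow_intertwines[OF that, of "aut_order G \<alpha>"] funpow_aut_order[OF that] by simp
  then obtain c where c: "mat_pow x (aut_order G \<alpha>) = c *\<^sub>R mat 1"
    using commuting_is_scalar by blast
  have "det (mat_pow x (aut_order G \<alpha>)) = 1"
    using assms abs_det_x by (simp add: det_mat_pow flip: power_even_abs)
  then have "c = 1"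
    using scaleR_eq_1_if_det_eq[OF odd_dim, of c "mat 1"] c by simp
  then show ?thesis
    using c by simp
qed

lemma abs_trace_mat_pow_less:
  assumes bound: "\<And>p. prime p \<Longrightarrow> p dvd aut_order G \<alpha> \<Longrightarrow>
      real CARD('n) > (real (aut_order G \<alpha>) - 1) *
        sqrt (real (card (fixed_points G (\<alpha> ^^ (aut_order G \<alpha> div p)))))"
    and "0 < k" "k < aut_order G \<alpha>"
  shows "\<bar>trace (mat_pow x k)\<bar> < CARD('n) / (real (aut_order G \<alpha>) - 1)"
proof -
  let ?m = "aut_order G \<alpha>"
  obtain p where "prime p" "p dvd ?m" and
    fixed_subset: "fixed_points G (\<alpha> ^^ k) \<subseteq> fixed_points G (\<alpha> ^^ (?m div p))"
    using fixed_points_funpow_subset[OF \<alpha>_closed funpow_aut_order assms(2,3)]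
    unfolding fixed_points_def by blast
  let ?C = "real (card (fixed_points G (\<alpha> ^^ (?m div p))))"
  have "(trace (mat_pow x k))\<^sup>2 \<le> ?C"
    using trace_mat_pow_squared_le[of k] card_mono[OF _ fixed_subset] finite_carrier
    by (force simp: fixed_points_def)
  then have "\<bar>trace (mat_pow x k)\<bar> \<le> sqrt ?C"
    using real_sqrt_le_mono by fastforce
  moreover have "0 < real ?m - 1"
    using assms(2,3) by simp
  ultimately have "\<bar>trace (mat_pow x k)\<bar> * (real ?m - 1) \<le> (real ?m - 1) * sqrt ?C"
    by (simp add: mult.commute)
  also have "\<dots> < CARD('n)"
    using bound[OF \<open>prime p\<close> \<open>p dvd ?m\<close>] .
  finally have "\<bar>trace (mat_pow x k)\<bar> * (real ?m - 1) < CARD('n)" .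
  then show ?thesis
    using \<open>0 < real ?m - 1\<close> by (simp add: pos_less_divide_eq)
qed

lemma eigenvalue_one_if_fixed_points_small:
  assumes "even (aut_order G \<alpha>)"
    and "\<And>p. prime p \<Longrightarrow> p dvd aut_order G \<alpha> \<Longrightarrow>
      real CARD('n) > (real (aut_order G \<alpha>) - 1) *
        sqrt (real (card (fixed_points G (\<alpha> ^^ (aut_order G \<alpha> div p)))))"
  obtains v where "v \<noteq> 0" "x *v v = v"
proof -
  have "2 \<le> aut_order G \<alpha>"
    using dvd_imp_le[OF assms(1) aut_order_pos] .
  then have "0 < (\<Sum>k<aut_order G \<alpha>. trace (mat_pow x k))"
    using abs_trace_mat_pow_less[OF assms(2)] by (intro sum_pos_if_other_terms_small) (simp_all add: trace_I)
  then show thesis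
    using fixed_vector_if_mat_pow_eq_1[OF mat_pow_aut_order[OF assms(1)]] that by force
qed

end

end

theorem lemma4p3p3:
  fixes G :: "('g, 'b) monoid_scheme"
    and \<rho> :: "'g \<Rightarrow> real^'n^'n"
    and n :: "real^'n^'n"
    and \<nu> :: "'g \<Rightarrow> 'g"
  assumes "simple_group G" and "finite (carrier G)" and "\<not> comm_group G"
    and "real_rep G \<rho>" and "irreducible_rep G \<rho>"
    and "\<exists>x\<in>carrier G. \<rho> x \<noteq> mat 1"
    and "odd CARD('n)"
    and "invertible n" and "\<exists>k>0. mat_pow n k = mat 1"
    and "(\<lambda>x. n ** \<rho> x ** matrix_inv n) ` carrier G = \<rho> ` carrier G"
    and "\<And>x. x \<in> carrier G \<Longrightarrow> \<nu> x = the_inv_into (carrier G) \<rho> (n ** \<rho> x ** matrix_inv n)"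
    and "g \<in> carrier G"
    and "\<alpha> = (\<lambda>x. g \<otimes>\<^bsub>G\<^esub> \<nu> x \<otimes>\<^bsub>G\<^esub> inv\<^bsub>G\<^esub> g)"
    and "even (aut_order G \<alpha>)"
    and "\<And>p. prime p \<Longrightarrow> p dvd aut_order G \<alpha> \<Longrightarrow>
           real CARD('n) > (real (aut_order G \<alpha>) - 1) *
              sqrt (real (card (fixed_points G (\<alpha> ^^ (aut_order G \<alpha> div p)))))"
  shows "\<exists>h\<in>carrier G. \<exists>v::real^'n. v \<noteq> 0 \<and> (\<rho> h ** n) *v v = v"
proof -
  interpret real_representation G \<rho>
    using assms(1,4) by (simp add: real_representation_def real_representation_axioms_def simple_group_def)
  have faithful: "inj_on \<rho> (carrier G)"
    using inj_on_if_simple assms(1,6) .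
  interpret faithful_odd_irrep G \<rho>
    using assms(2,5,7) faithful by unfold_locales
  have \<nu>: "\<nu> u \<in> carrier G" "\<rho> (\<nu> u) ** n = n ** \<rho> u" if "u \<in> carrier G" for u
    using conj_by_normalizing_matrix[OF faithful assms(8,10) that] assms(11)[OF that] by simp_all
  obtain k where "0 < k" "mat_pow n k = mat 1"
    using assms(9) by blast
  then have "invertible (\<rho> g ** n)" "\<bar>det (\<rho> g ** n)\<bar> = 1"
    using assms(4,8,12) abs_det_rep abs_det_eq_1_if_mat_pow_eq_1
    by (auto simp: real_rep_def invertible_mult det_mul abs_mult)
  moreover have "\<alpha> \<in> carrier G \<rightarrow> carrier G"
    using \<nu> assms(12,13) by simp
  moreover have "\<rho> (\<alpha> u) ** (\<rho> g ** n) = (\<rho> g ** n) ** \<rho> u" if "u \<in> carrier G" for u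
    using conj_intertwines[OF assms(12) \<nu>(1)[OF that] \<nu>(2)[OF that]] assms(13) by simp
  ultimately obtain v where "v \<noteq> 0" "(\<rho> g ** n) *v v = v"
    using eigenvalue_one_if_fixed_points_small[OF _ _ _ _ assms(14,15)] by blast
  then show ?thesis
    using assms(12) by blast
qed

end
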